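(* Let $\mathbf A$ be a residuated semigroup balanced over $\mathbf I$. If $u_{a/b}=u_au_b$ holds for all $a,b\in A$, then $u_{ab}=u_au_b$ holds for all $a,b\in A$. Likewise, if $u_{b\backslash a}=u_au_b$ holds for all $a,b\in A$, then $u_{ab}=u_au_b$ holds for all $a,b\in A$.
   Context: A residuated semigroup is a structure $\langle A,\le,\cdot,\backslash,/\rangle$ where $\langle A,\le\rangle$ is a poset, $\langle A,\cdot\rangle$ is a semigroup, and $xy\le z\iff x\le z/y\iff y\le x\backslash z$. An element $p$ is positive if $a\le pa$ and $a\le ap$ for all $a$, idempotent if $pp=p$, central if $pa=ap$ for all $a$. Let $I$ be a nonempty set of central positive idempotents of $\mathbf A$ closed under multiplication ($\mathbf I=\langle I,\cdot\rangle$). $\mathbf A$ is balanced over $\mathbf I$ if for every $a\in A$ the element $u_a:=\max\{p\in I: pa=a\}$ exists (maximum w.r.t. $\le$). *)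

theory Defs
  imports Main
begin

text \<open>A residuated semigroup on the whole type 'a, given by order le,
 multiplication mult, left division ldiv (x\y = ldiv x y) and right division
 rdiv (x/y = rdiv x y).\<close>
definition residuated_semigroup ::
  "('a \<Rightarrow> 'a \<Rightarrow> bool) \<Rightarrow> ('a \<Rightarrow> 'a \<Rightarrow> 'a) \<Rightarrow> ('a \<Rightarrow> 'a \<Rightarrow> 'a) \<Rightarrow> ('a \<Rightarrow> 'a \<Rightarrow> 'a) \<Rightarrow> bool" where
  "residuated_semigroup le mult ldiv rdiv \<longleftrightarrow>
     (\<forall>x. le x x) \<and>
     (\<forall>x y. le x y \<and> le y x \<longrightarrow> x = y) \<and>
     (\<forall>x y z. le x y \<and> le y z \<longrightarrow> le x z) \<and>
     (\<forall>x y z. mult (mult x y) z = mult x (mult y z)) \<and>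
     (\<forall>x y z. (le (mult x y) z \<longleftrightarrow> le x (rdiv z y)) \<and>
              (le (mult x y) z \<longleftrightarrow> le y (ldiv x z)))"

definition positive_el :: "('a \<Rightarrow> 'a \<Rightarrow> bool) \<Rightarrow> ('a \<Rightarrow> 'a \<Rightarrow> 'a) \<Rightarrow> 'a \<Rightarrow> bool" where
  "positive_el le mult p \<longleftrightarrow> (\<forall>a. le a (mult p a) \<and> le a (mult a p))"

definition idempotent_el :: "('a \<Rightarrow> 'a \<Rightarrow> 'a) \<Rightarrow> 'a \<Rightarrow> bool" where
  "idempotent_el mult p \<longleftrightarrow> mult p p = p"

definition central_el :: "('a \<Rightarrow> 'a \<Rightarrow> 'a) \<Rightarrow> 'a \<Rightarrow> bool" where
  "central_el mult p \<longleftrightarrow> (\<forall>a. mult p a = mult a p)"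

definition idem_set :: "('a \<Rightarrow> 'a \<Rightarrow> bool) \<Rightarrow> ('a \<Rightarrow> 'a \<Rightarrow> 'a) \<Rightarrow> 'a set \<Rightarrow> bool" where
  "idem_set le mult I \<longleftrightarrow> I \<noteq> {} \<and>
     (\<forall>p\<in>I. central_el mult p \<and> positive_el le mult p \<and> idempotent_el mult p) \<and>
     (\<forall>p\<in>I. \<forall>q\<in>I. mult p q \<in> I)"

definition is_u :: "('a \<Rightarrow> 'a \<Rightarrow> bool) \<Rightarrow> ('a \<Rightarrow> 'a \<Rightarrow> 'a) \<Rightarrow> 'a set \<Rightarrow> 'a \<Rightarrow> 'a \<Rightarrow> bool" where
  "is_u le mult I a p \<longleftrightarrow> p \<in> I \<and> mult p a = a \<and> (\<forall>q\<in>I. mult q a = a \<longrightarrow> le q p)"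

definition balanced :: "('a \<Rightarrow> 'a \<Rightarrow> bool) \<Rightarrow> ('a \<Rightarrow> 'a \<Rightarrow> 'a) \<Rightarrow> 'a set \<Rightarrow> bool" where
  "balanced le mult I \<longleftrightarrow> (\<forall>a. \<exists>p. is_u le mult I a p)"

definition u_el :: "('a \<Rightarrow> 'a \<Rightarrow> bool) \<Rightarrow> ('a \<Rightarrow> 'a \<Rightarrow> 'a) \<Rightarrow> 'a set \<Rightarrow> 'a \<Rightarrow> 'a" where
  "u_el le mult I a = (THE p. is_u le mult I a p)"

end

theory Submission
  imports Defs
begin

text \<open>Both hypotheses give \<open>u\<^sub>x u\<^sub>y\<^sub>z = u\<^sub>x u\<^sub>y u\<^sub>z\<close> for all \<open>x\<close>, by computing \<open>u\<close> of
  \<open>x/(yz) = (x/z)/y\<close>, respectively of \<open>(yz)\x = z\(y\x)\<close>, in two ways.  Taking \<open>x = yz\<close>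
  gives \<open>u\<^sub>y\<^sub>z = u\<^sub>y\<^sub>z u\<^sub>y u\<^sub>z\<close>, and taking \<open>x = u\<^sub>y u\<^sub>z\<close>, which is its own \<open>u\<close>, gives
  \<open>u\<^sub>y u\<^sub>z u\<^sub>y\<^sub>z = u\<^sub>y u\<^sub>z\<close>; as the elements of \<open>I\<close> commute, \<open>u\<^sub>y\<^sub>z = u\<^sub>y u\<^sub>z\<close>.\<close>

locale residuated =
  fixes le :: "'a \<Rightarrow> 'a \<Rightarrow> bool" (infix "\<sqsubseteq>" 50)
    and mult :: "'a \<Rightarrow> 'a \<Rightarrow> 'a" (infixl "\<cdot>" 70)
    and ldiv rdiv :: "'a \<Rightarrow> 'a \<Rightarrow> 'a"
  assumes residuated_semigroup: "residuated_semigroup le mult ldiv rdiv"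
begin

lemma le_refl: "x \<sqsubseteq> x"
  and le_antisym: "x \<sqsubseteq> y \<Longrightarrow> y \<sqsubseteq> x \<Longrightarrow> x = y"
  and mult_assoc: "x \<cdot> y \<cdot> z = x \<cdot> (y \<cdot> z)"
  and mult_le_iff_le_rdiv: "x \<cdot> y \<sqsubseteq> z \<longleftrightarrow> x \<sqsubseteq> rdiv z y"
  and mult_le_iff_le_ldiv: "x \<cdot> y \<sqsubseteq> z \<longleftrightarrow> y \<sqsubseteq> ldiv x z"
  using residuated_semigroup unfolding residuated_semigroup_def by blast+

lemma eq_iff_same_lower_bounds: "(\<And>w. w \<sqsubseteq> x \<longleftrightarrow> w \<sqsubseteq> y) \<Longrightarrow> x = y"
  using le_refl le_antisym by blast

lemma rdiv_rdiv: "rdiv (rdiv x z) y = rdiv x (y \<cdot> z)"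
  by (rule eq_iff_same_lower_bounds) (metis mult_le_iff_le_rdiv mult_assoc)

lemma ldiv_ldiv: "ldiv z (ldiv y x) = ldiv (y \<cdot> z) x"
  by (rule eq_iff_same_lower_bounds) (metis mult_le_iff_le_ldiv mult_assoc)

end

locale balanced_residuated = residuated +
  fixes I :: "'a set"
  assumes idem_set: "idem_set le mult I"
    and balanced: "balanced le mult I"
begin

abbreviation u :: "'a \<Rightarrow> 'a" where
  "u \<equiv> u_el le mult I"

lemma central: "p \<in> I \<Longrightarrow> p \<cdot> a = a \<cdot> p"
  and le_mult_idem: "p \<in> I \<Longrightarrow> a \<sqsubseteq> a \<cdot> p"
  and idem: "p \<in> I \<Longrightarrow> p \<cdot> p = p"
  and mult_closed: "p \<in> I \<Longrightarrow> q \<in> I \<Longrightarrow> p \<cdot> q \<in> I"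
  using idem_set
  unfolding idem_set_def central_el_def positive_el_def idempotent_el_def by blast+

lemma is_u_unique: "is_u le mult I x p \<Longrightarrow> is_u le mult I x q \<Longrightarrow> p = q"
  unfolding is_u_def using le_antisym by blast

lemma u_eqI: "is_u le mult I x p \<Longrightarrow> u x = p"
  unfolding u_el_def using is_u_unique by blast

lemma is_u_u_el: "is_u le mult I x (u x)"
  using balanced u_eqI unfolding balanced_def by blast

lemma u_in_I: "u x \<in> I"
  using is_u_u_el unfolding is_u_def by blast

lemma u_of_idem: "p \<in> I \<Longrightarrow> u p = p"
  by (rule u_eqI) (metis is_u_def idem le_mult_idem)

lemma u_mult_eqI:
  assumes "\<And>x. u x \<cdot> u (y \<cdot> z) = u x \<cdot> (u y \<cdot> u z)"
  shows "u (y \<cdot> z) = u y \<cdot> u z"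
proof -
  define s r where "s = u (y \<cdot> z)" and "r = u y \<cdot> u z"
  have "r \<in> I"
    unfolding r_def by (intro mult_closed u_in_I)
  have "s = s \<cdot> r"
    using assms[of "y \<cdot> z"] idem[OF u_in_I] unfolding s_def r_def by simp
  moreover have "r \<cdot> s = r"
    using assms[of r] u_of_idem[OF \<open>r \<in> I\<close>] idem[OF \<open>r \<in> I\<close>] unfolding s_def r_def by simp
  ultimately show ?thesis
    using central[OF u_in_I] unfolding s_def r_def by metis
qed

lemma u_mult_if_u_rdiv:
  assumes u_rdiv: "\<And>a b. u (rdiv a b) = u a \<cdot> u b"
  shows "u (a \<cdot> b) = u a \<cdot> u b"
proof (rule u_mult_eqI)
  fix x
  have "u x \<cdot> u (a \<cdot> b) = u (rdiv (rdiv x b) a)"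
    by (simp add: u_rdiv rdiv_rdiv)
  also have "\<dots> = u x \<cdot> (u a \<cdot> u b)"
    by (metis u_rdiv mult_assoc central u_in_I)
  finally show "u x \<cdot> u (a \<cdot> b) = u x \<cdot> (u a \<cdot> u b)" .
qed

lemma u_mult_if_u_ldiv:
  assumes u_ldiv: "\<And>a b. u (ldiv b a) = u a \<cdot> u b"
  shows "u (a \<cdot> b) = u a \<cdot> u b"
proof (rule u_mult_eqI)
  fix x
  have "u x \<cdot> u (a \<cdot> b) = u (ldiv b (ldiv a x))"
    by (simp add: u_ldiv ldiv_ldiv)
  also have "\<dots> = u x \<cdot> (u a \<cdot> u b)"
    by (simp add: u_ldiv mult_assoc)
  finally show "u x \<cdot> u (a \<cdot> b) = u x \<cdot> (u a \<cdot> u b)" .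
qed

end

theorem lemma6p5:
  fixes le :: "'a \<Rightarrow> 'a \<Rightarrow> bool" and mult ldiv rdiv :: "'a \<Rightarrow> 'a \<Rightarrow> 'a" and I :: "'a set"
  assumes "residuated_semigroup le mult ldiv rdiv"
    and "idem_set le mult I"
    and "balanced le mult I"
  shows "((\<forall>a b. u_el le mult I (rdiv a b) = mult (u_el le mult I a) (u_el le mult I b))
            \<longrightarrow> (\<forall>a b. u_el le mult I (mult a b) = mult (u_el le mult I a) (u_el le mult I b)))
       \<and> ((\<forall>a b. u_el le mult I (ldiv b a) = mult (u_el le mult I a) (u_el le mult I b))
            \<longrightarrow> (\<forall>a b. u_el le mult I (mult a b) = mult (u_el le mult I a) (u_el le mult I b)))"
proof -
  interpret balanced_residuated le mult ldiv rdiv I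
    using assms by unfold_locales
  show ?thesis
    using u_mult_if_u_rdiv u_mult_if_u_ldiv by blast
qed

end
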